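(* Fix $2\le d\le7$ and let $(\hat a_*,\hat b_*,\hat c_* )$ be given by: $d=2$: $(0.5,0.7,0.27)$; $d=3$: $(0.4,0.6,0.2)$; $d=4$: $(0.3,0.5,0.1)$; $d=5$: $(0.3,0.4,0.1)$; $d=6$: $(0.27,0.32,0.1)$; $d=7$: $(0.26,0.27,0.01)$. Then for any $0\le c<1$, $\psi^{(k)}(\mathcal{S}_{0,1,c})\subset\mathcal{S}_{\hat a_*,\hat b_*,\hat c_*}$ for all large enough $k$.
   Context: For a probability distribution $z$ on $\mathbb{Z}$ set $A(z)_i=(z_{i-1}+z_i+z_{i+1})^d$, $F(z)=A(z)/\sum_iA(z)_i$. $\mathcal{E}$ is the set of symmetric probability distributions on $\mathbb{Z}$ whose support is an interval or all of $\mathbb{Z}$. $\mathsf R\colon\mathcal{E}\to[0,\infty)^{\{1,2,\dots\}}$, $\mathsf R(z)_i=z_i/z_{i-1}$ if $z_{i-1}\ne0$ and $0$ otherwise; $\mathsf R$ is injective, $\mathcal{R}:=\mathsf R(\mathcal{E})$, $\psi:=\mathsf R\circ F\circ\mathsf R^{-1}\colon\mathcal{R}\to\mathcal{R}$, i.e. $\psi(x)_1=\big(\frac{1+x_1+x_1x_2}{1+2x_1}\big)^d$ and $\psi(x)_n=x_{n-1}^d\big(\frac{1+x_n+x_nx_{n+1}}{1+x_{n-1}+x_{n-1}x_n}\big)^d$ for $n\ge2$; $\psi^{(k)}$ is its $k$-fold iterate. For reals $a,b,c$, $\mathcal{S}_{a,b,c}:=\{x\in\mathcal{R}: a\le x_1\le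 b,\ 0\le x_n\le c\ \forall n\ge2\}$. *)

theory Defs
  imports "HOL-Analysis.Analysis"
begin

text \<open>The class E: symmetric probability distributions on the integers whose support
  is an interval or all of the integers (equivalently: order-convex support, which is
  automatically nonempty and symmetric).\<close>
definition Edist :: "(int \<Rightarrow> real) set" where
  "Edist = {z. (\<forall>i. 0 \<le> z i) \<and> (z has_sum 1) UNIV \<and> (\<forall>i. z (-i) = z i)
              \<and> (\<forall>i j k. i \<le> j \<and> j \<le> k \<and> z i \<noteq> 0 \<and> z k \<noteq> 0 \<longrightarrow> z j \<noteq> 0)}"

text \<open>The ratio map R. Sequences indexed by 1,2,...; the unused entry at index 0 is set to 0.\<close>
definition Rmap :: "(int \<Rightarrow> real) \<Rightarrow> (nat \<Rightarrow> real)" where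
  "Rmap z = (\<lambda>i. if i = 0 then 0
                 else if z (int i - 1) \<noteq> 0 then z (int i) / z (int i - 1) else 0)"

definition Rset :: "(nat \<Rightarrow> real) set" where
  "Rset = Rmap ` Edist"

text \<open>The map psi = R o F o R^{-1}, written out explicitly.\<close>
definition psi :: "nat \<Rightarrow> (nat \<Rightarrow> real) \<Rightarrow> (nat \<Rightarrow> real)" where
  "psi d x = (\<lambda>n. if n = 0 then 0
                  else if n = 1 then ((1 + x 1 + x 1 * x 2) / (1 + 2 * x 1)) ^ d
                  else x (n - 1) ^ d *
                       ((1 + x n + x n * x (n + 1)) / (1 + x (n - 1) + x (n - 1) * x n)) ^ d)"

definition Sset :: "real \<Rightarrow> real \<Rightarrow> real \<Rightarrow> (nat \<Rightarrow> real) set" where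
  "Sset a b c = {x \<in> Rset. a \<le> x 1 \<and> x 1 \<le> b \<and> (\<forall>n\<ge>2. 0 \<le> x n \<and> x n \<le> c)}"

definition ahat :: "nat \<Rightarrow> real" where
  "ahat d = (if d = 2 then 0.5 else if d = 3 then 0.4 else if d = 4 then 0.3
             else if d = 5 then 0.3 else if d = 6 then 0.27 else 0.26)"

definition bhat :: "nat \<Rightarrow> real" where
  "bhat d = (if d = 2 then 0.7 else if d = 3 then 0.6 else if d = 4 then 0.5
             else if d = 5 then 0.4 else if d = 6 then 0.32 else 0.27)"

definition chat :: "nat \<Rightarrow> real" where
  "chat d = (if d = 2 then 0.27 else if d = 3 then 0.2 else if d = 4 then 0.1
             else if d = 5 then 0.1 else if d = 6 then 0.1 else 0.01)"

end

theory Submission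
  imports Defs
begin

text \<open>In ratio coordinates, psi acts by psi(x)_1 = h(x_1, x_2)^d and
  psi(x)_n = T(x_(n-1), x_n, x_(n+1))^d for n \<ge> 2 (\<open>psi_head\<close> and \<open>psi_tail\<close> below), where h is
  decreasing in its first and increasing in its second argument and T is increasing in all three.
  So the image of a box S_{a,b,c} lies in a box whose endpoints are computed from its corners. The
  image stays in R because once the tail ratios are bounded by some c' < 1, the partial products
  decay geometrically and can be normalised to a distribution in E. Starting from S_{0,1,c}, the
  tail bound improves from c to max (T(1,c,c)^2) (c^2), which multiplies 1 - c by at least 1.01
  until c \<le> 1/2. From S_{0,1,1/2} an explicit finite chain of boxes on the grid 1/10000, each
  mapped into the next, ends in a box that psi maps into itself and that lies inside the target.\<close>

definition ratio_prod :: "(nat \<Rightarrow> real) \<Rightarrow> nat \<Rightarrow> real" where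
  "ratio_prod x m = (\<Prod>j\<in>{1..m}. x j)"

lemma ratio_prod_0 [simp]: "ratio_prod x 0 = 1"
  by (simp add: ratio_prod_def)

lemma ratio_prod_Suc: "ratio_prod x (Suc m) = ratio_prod x m * x (Suc m)"
  by (simp add: ratio_prod_def prod.nat_ivl_Suc' mult.commute)

lemma ratio_prod_nonneg: "(\<And>n. 0 \<le> x n) \<Longrightarrow> 0 \<le> ratio_prod x m"
  by (simp add: ratio_prod_def prod_nonneg)

lemma ratio_prod_eq_0_mono:
  assumes "m \<le> m'" and "ratio_prod x m = 0"
  shows "ratio_prod x m' = 0"
  using assms by (induction m' rule: dec_induct) (simp_all add: ratio_prod_Suc)

lemma ratio_prod_eq_0_imp_next_eq_0:
  assumes zero: "\<And>n. 1 \<le> n \<Longrightarrow> x n = 0 \<Longrightarrow> x (Suc n) = 0"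
  shows "ratio_prod x m = 0 \<Longrightarrow> x (Suc m) = 0"
proof (induction m)
  case (Suc m)
  then have "ratio_prod x m = 0 \<or> x (Suc m) = 0" by (simp add: ratio_prod_Suc)
  then show ?case using Suc.IH zero by fastforce
qed simp

lemma RsetD:
  assumes "x \<in> Rset"
  shows "x 0 = 0" and "0 \<le> x n" and "1 \<le> n \<Longrightarrow> x n = 0 \<Longrightarrow> x (Suc n) = 0"
proof -
  obtain z where z: "z \<in> Edist" and x: "x = Rmap z" using assms unfolding Rset_def by blast
  have nonneg: "\<And>i. 0 \<le> z i" and symm: "\<And>i. z (-i) = z i"
    and convex: "\<And>i j k. i \<le> j \<Longrightarrow> j \<le> k \<Longrightarrow> z i \<noteq> 0 \<Longrightarrow> z k \<noteq> 0 \<Longrightarrow> z j \<noteq> 0"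
    using z unfolding Edist_def by blast+
  show "x 0 = 0" "0 \<le> x n" using x nonneg by (simp_all add: Rmap_def)
  assume n: "1 \<le> n" and xn: "x n = 0"
  have "z (int n) = 0"
  proof (rule ccontr)
    assume zn: "z (int n) \<noteq> 0"
    \<comment> \<open>by symmetry \<open>-n\<close> is in the support too, hence so is \<open>n - 1\<close>\<close>
    then have "z (int n - 1) \<noteq> 0"
      using convex[of "- int n" "int n - 1" "int n"] symm[of "int n"] n by simp
    then show False using zn xn x n by (simp add: Rmap_def)
  qed
  then show "x (Suc n) = 0" using x by (simp add: Rmap_def)
qed

lemma summable_on_int_abs:
  fixes f :: "nat \<Rightarrow> real"
  assumes "summable f" and "\<And>n. 0 \<le> f n"
  shows "(\<lambda>i::int. f (nat \<bar>i\<bar>)) summable_on UNIV"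
proof -
  let ?g = "\<lambda>i::int. f (nat \<bar>i\<bar>)"
  have "?g summable_on range int"
    using assms
    by (subst summable_on_reindex) (auto simp: inj_on_def o_def summable_on_UNIV_nonneg_real_iff)
  moreover have "?g summable_on range (\<lambda>n. - int (Suc n))"
  proof -
    have "summable (\<lambda>n. f (Suc n))" using assms(1) by (subst summable_Suc_iff)
    then show ?thesis
      using assms(2) by (subst summable_on_reindex)
        (auto simp: inj_on_def o_def summable_on_UNIV_nonneg_real_iff nat_add_distrib
          simp del: of_nat_Suc)
  qed
  ultimately have "?g summable_on (range int \<union> range (\<lambda>n. - int (Suc n)))"
    by (intro summable_on_Un_disjoint) auto
  moreover have "range int \<union> range (\<lambda>n. - int (Suc n)) = UNIV"
  proof -
    have "i \<in> range int \<or> i = - int (Suc (nat (- i - 1)))" for i :: int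
      by (cases "0 \<le> i") (auto intro: image_eqI[of _ _ "nat i"])
    then show ?thesis by blast
  qed
  ultimately show ?thesis by simp
qed

text \<open>\<open>ratio_prod x m\<close> is z_m / z_0 for the distribution z to be recovered; the witness is
  z_i = ratio_prod x |i| / (sum of these over all integers i).\<close>
lemma Rset_intro:
  assumes x0: "x 0 = 0" and nonneg: "\<And>n. 0 \<le> x n"
    and zero: "\<And>n. 1 \<le> n \<Longrightarrow> x n = 0 \<Longrightarrow> x (Suc n) = 0"
    and summable: "summable (ratio_prod x)"
  shows "x \<in> Rset"
proof -
  define w where "w i = ratio_prod x (nat \<bar>i\<bar>)" for i :: int
  have w_nonneg: "0 \<le> w i" for i by (simp add: w_def ratio_prod_nonneg nonneg)
  have "w summable_on UNIV"
    unfolding w_def using summable by (rule summable_on_int_abs) (simp add: ratio_prod_nonneg nonneg)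
  define S where "S = infsum w UNIV"
  have w_sum: "(w has_sum S) UNIV"
    unfolding S_def using \<open>w summable_on UNIV\<close> by (rule has_sum_infsum)
  have "sum w {0} \<le> S"
    using w_sum w_nonneg by (intro finite_sum_le_has_sum) auto
  then have S: "1 \<le> S" by (simp add: w_def)
  define z where "z i = w i / S" for i
  have "((\<lambda>i. w i * (1 / S)) has_sum (S * (1 / S))) UNIV"
    by (rule has_sum_cmult_left[OF w_sum])
  then have z_sum: "(z has_sum 1) UNIV" using S unfolding z_def [abs_def] by simp
  have "z \<in> Edist"
    unfolding Edist_def
  proof (intro CollectI conjI allI impI z_sum)
    show "0 \<le> z i" "z (- i) = z i" for i using S w_nonneg by (simp_all add: z_def w_def)
    fix i j k :: int assume ijk: "i \<le> j \<and> j \<le> k \<and> z i \<noteq> 0 \<and> z k \<noteq> 0"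
    then have "ratio_prod x (max (nat \<bar>i\<bar>) (nat \<bar>k\<bar>)) \<noteq> 0"
      by (simp add: z_def w_def max_def)
    moreover have "nat \<bar>j\<bar> \<le> max (nat \<bar>i\<bar>) (nat \<bar>k\<bar>)" using ijk by auto
    ultimately show "z j \<noteq> 0" using S ratio_prod_eq_0_mono by (force simp: z_def w_def)
  qed
  moreover have "Rmap z = x"
  proof
    fix n
    show "Rmap z n = x n"
    proof (cases n)
      case (Suc m)
      then have "nat \<bar>int n\<bar> = Suc m" "nat \<bar>int n - 1\<bar> = m" by simp_all
      then show ?thesis
        using Suc S ratio_prod_eq_0_imp_next_eq_0[of x m] zero
        by (auto simp: Rmap_def z_def w_def ratio_prod_Suc)
    qed (simp add: Rmap_def x0)
  qed
  ultimately show ?thesis unfolding Rset_def by blast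
qed

lemma summable_ratio_prod:
  assumes nonneg: "\<And>n. 0 \<le> x n" and "x 1 \<le> 1" and bound: "\<And>n. 2 \<le> n \<Longrightarrow> x n \<le> c"
    and "c < 1"
  shows "summable (ratio_prod x)"
proof -
  have c: "0 \<le> c" using nonneg[of 2] bound[of 2] by simp
  have geometric: "ratio_prod x (Suc m) \<le> c ^ m" for m
  proof (induction m)
    case (Suc m)
    have "ratio_prod x (Suc (Suc m)) = ratio_prod x (Suc m) * x (Suc (Suc m))"
      by (rule ratio_prod_Suc)
    also have "\<dots> \<le> c ^ m * c"
      using Suc bound[of "Suc (Suc m)"]
      by (intro mult_mono ratio_prod_nonneg nonneg c zero_le_power) auto
    finally show ?case by (simp add: mult.commute)
  qed (use \<open>x 1 \<le> 1\<close> in \<open>simp add: ratio_prod_Suc\<close>)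
  have "summable (\<lambda>m. ratio_prod x (Suc m))"
    using c \<open>c < 1\<close> geometric
    by (intro summable_comparison_test[OF _ summable_geometric, of _ c])
      (auto simp: ratio_prod_nonneg nonneg)
  then show ?thesis by (subst (asm) summable_Suc_iff)
qed

definition psi_head :: "real \<Rightarrow> real \<Rightarrow> real" where
  "psi_head p q = (1 + p + p * q) / (1 + 2 * p)"

definition psi_tail :: "real \<Rightarrow> real \<Rightarrow> real \<Rightarrow> real" where
  "psi_tail p q r = p * (1 + q + q * r) / (1 + p + p * q)"

lemma psi_eq_psi_head: "psi d x 1 = psi_head (x 1) (x 2) ^ d"
  by (simp add: psi_def psi_head_def)

lemma psi_eq_psi_tail:
  assumes "2 \<le> n" "0 \<le> x (n - 1)" "0 \<le> x n"
  shows "psi d x n = psi_tail (x (n - 1)) (x n) (x (n + 1)) ^ d"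
  using assms by (simp add: psi_def psi_tail_def power_mult_distrib power_divide)

lemma divide_le_divide_cross:
  fixes a b c d :: "'a :: linordered_field"
  assumes "0 < b" "0 < d" "a * d \<le> c * b"
  shows "a / b \<le> c / d"
  using assms by (simp add: divide_simps)

lemma psi_head_pos: "0 \<le> p \<Longrightarrow> 0 \<le> q \<Longrightarrow> 0 < psi_head p q"
  by (simp add: psi_head_def add_pos_nonneg)

lemma psi_head_mono:
  assumes "0 \<le> p" "p \<le> P" "0 \<le> q" "q \<le> Q" "Q \<le> 1"
  shows "psi_head P q \<le> psi_head p Q"
proof -
  have "psi_head P q \<le> psi_head P Q"
    using assms unfolding psi_head_def by (intro divide_right_mono) (auto intro: mult_left_mono)
  also have "\<dots> \<le> psi_head p Q"
  proof -
    have "(1 + p + p * Q) * (1 + 2 * P) - (1 + P + P * Q) * (1 + 2 * p) = (P - p) * (1 - Q)"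
      by (simp add: algebra_simps)
    moreover have "0 \<le> (P - p) * (1 - Q)" using assms by simp
    ultimately have "(1 + P + P * Q) * (1 + 2 * p) \<le> (1 + p + p * Q) * (1 + 2 * P)" by linarith
    then show ?thesis
      unfolding psi_head_def using assms by (intro divide_le_divide_cross) auto
  qed
  finally show ?thesis .
qed

lemma psi_head_le_1: "0 \<le> p \<Longrightarrow> 0 \<le> q \<Longrightarrow> q \<le> 1 \<Longrightarrow> psi_head p q \<le> 1"
  using psi_head_mono[of 0 p q 1] by (simp add: psi_head_def)

lemma psi_tail_nonneg: "0 \<le> p \<Longrightarrow> 0 \<le> q \<Longrightarrow> 0 \<le> r \<Longrightarrow> 0 \<le> psi_tail p q r"
  by (simp add: psi_tail_def)

lemma psi_tail_diag: "0 \<le> c \<Longrightarrow> psi_tail c c c = c"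
  by (simp add: psi_tail_def add_pos_nonneg add_nonneg_eq_0_iff)

lemma psi_tail_mono:
  assumes "0 \<le> p" "p \<le> P" "0 \<le> q" "q \<le> Q" "0 \<le> r" "r \<le> R"
  shows "psi_tail p q r \<le> psi_tail P Q R"
proof -
  have pos: "0 < 1 + s + s * t" if "0 \<le> s" "0 \<le> t" for s t :: real
    using that by (simp add: add_pos_nonneg)
  have "psi_tail p q r \<le> psi_tail P q r"
  proof -
    let ?K = "1 + q + q * r"
    have "P * ?K * (1 + p + p * q) - p * ?K * (1 + P + P * q) = (P - p) * ?K"
      by (simp add: algebra_simps)
    moreover have "0 \<le> (P - p) * ?K" using assms by simp
    ultimately have "p * ?K * (1 + P + P * q) \<le> P * ?K * (1 + p + p * q)" by linarith
    then show ?thesis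
      unfolding psi_tail_def using assms pos by (intro divide_le_divide_cross) auto
  qed
  also have "\<dots> \<le> psi_tail P Q r"
  proof -
    have "P * (1 + Q + Q * r) * (1 + P + P * q) - P * (1 + q + q * r) * (1 + P + P * Q)
        = P * ((Q - q) * (1 + r + r * P))"
      by (simp add: algebra_simps)
    moreover have "0 \<le> P * ((Q - q) * (1 + r + r * P))" using assms by simp
    ultimately have "P * (1 + q + q * r) * (1 + P + P * Q) \<le> P * (1 + Q + Q * r) * (1 + P + P * q)"
      by linarith
    then show ?thesis
      unfolding psi_tail_def using assms pos by (intro divide_le_divide_cross) auto
  qed
  also have "\<dots> \<le> psi_tail P Q R"
    using assms unfolding psi_tail_def
    by (intro divide_right_mono mult_left_mono add_left_mono) (auto intro: mult_nonneg_nonneg)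
  finally show ?thesis .
qed

lemma psi_nonneg: "x \<in> Rset \<Longrightarrow> 0 \<le> psi d x n"
  using RsetD(2)[of x] psi_head_pos[of "x 1" "x 2"] psi_tail_nonneg psi_eq_psi_tail[of n x d]
  by (cases "n \<le> 1") (auto simp: psi_def psi_head_def le_Suc_eq)

lemma psi_mem_Rset:
  assumes "1 \<le> d" and x: "x \<in> Rset" and "psi d x 1 \<le> 1"
    and bound: "\<And>n. 2 \<le> n \<Longrightarrow> psi d x n \<le> c" and "c < 1"
  shows "psi d x \<in> Rset"
proof (rule Rset_intro)
  show "psi d x 0 = 0" by (simp add: psi_def)
  show "0 \<le> psi d x n" for n using x by (rule psi_nonneg)
  show "summable (ratio_prod (psi d x))"
    using assms psi_nonneg[OF x] by (intro summable_ratio_prod) auto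
  fix n assume n: "1 \<le> n" and zero: "psi d x n = 0"
  have "0 < psi d x 1"
    unfolding psi_eq_psi_head using psi_head_pos[of "x 1" "x 2"] RsetD(2)[OF x] by simp
  then have "n \<noteq> 1" using zero by auto
  with n have n2: "2 \<le> n" by simp
  have "0 < 1 + x n + x n * x (n + 1)" "0 < 1 + x (n - 1) + x (n - 1) * x n"
    using RsetD(2)[OF x] by (simp_all add: add_pos_nonneg)
  then have "x (n - 1) = 0" using zero n2 by (simp add: psi_def)
  then have "x n = 0" using RsetD(3)[OF x, of "n - 1"] n2 by simp
  then show "psi d x (Suc n) = 0" using \<open>1 \<le> d\<close> n2 by (simp add: psi_def)
qed

lemma psi_image_Sset:
  assumes "1 \<le> d" "0 \<le> a" "c < 1" "c' < 1"
    and "a' \<le> psi_head b 0 ^ d" "psi_head a c ^ d \<le> b'"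
    and "psi_tail b c c ^ d \<le> c'" "c ^ d \<le> c'"
  shows "psi d ` Sset a b c \<subseteq> Sset a' b' c'"
proof
  fix y assume "y \<in> psi d ` Sset a b c"
  then obtain x where "x \<in> Sset a b c" and y: "y = psi d x" by blast
  then have x: "x \<in> Rset" and x1: "a \<le> x 1" "x 1 \<le> b" and x_tail: "\<And>n. 2 \<le> n \<Longrightarrow> x n \<le> c"
    by (auto simp: Sset_def)
  note x_nonneg = RsetD(2)[OF x]
  have c: "0 \<le> c" using x_nonneg[of 2] x_tail[of 2] by simp
  have b: "0 \<le> b" using x1 x_nonneg[of 1] by linarith
  have "psi_head b 0 \<le> psi_head (x 1) (x 2)" "psi_head (x 1) (x 2) \<le> psi_head a c"
    using assms x1 x_nonneg x_tail[of 2] by (auto intro: psi_head_mono)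
  then have "psi_head b 0 ^ d \<le> y 1" "y 1 \<le> psi_head a c ^ d"
    unfolding y psi_eq_psi_head using psi_head_pos[OF b, of 0] psi_head_pos[of "x 1" "x 2"] x_nonneg
    by (auto intro!: power_mono)
  then have y1: "a' \<le> y 1" "y 1 \<le> b'" using assms by linarith+
  have y_tail: "y n \<le> c'" if n: "2 \<le> n" for n
  proof -
    have "psi_tail (x (n - 1)) (x n) (x (n + 1)) \<le> (if n = 2 then psi_tail b c c else c)"
    proof (cases "n = 2")
      case False
      then have "psi_tail (x (n - 1)) (x n) (x (n + 1)) \<le> psi_tail c c c"
        using n x_nonneg x_tail by (intro psi_tail_mono) auto
      then show ?thesis using False psi_tail_diag[OF c] by simp
    qed (use x_nonneg x_tail x1 in \<open>auto intro!: psi_tail_mono\<close>)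
    then have "psi_tail (x (n - 1)) (x n) (x (n + 1)) ^ d \<le> (if n = 2 then psi_tail b c c else c) ^ d"
      using x_nonneg by (intro power_mono psi_tail_nonneg) auto
    then show ?thesis using assms n x_nonneg by (simp add: y psi_eq_psi_tail split: if_splits)
  qed
  have "y 1 \<le> 1"
    using psi_head_le_1[of "x 1" "x 2"] psi_head_pos[of "x 1" "x 2"] x_nonneg x_tail[of 2] \<open>c < 1\<close>
    unfolding y psi_eq_psi_head by (simp add: power_le_one)
  then have "y \<in> Rset" using assms x y_tail unfolding y by (intro psi_mem_Rset[where c = c']) auto
  then show "y \<in> Sset a' b' c'"
    using y1 y_tail psi_nonneg[OF x] by (simp add: Sset_def y)
qed

definition grid_box :: "nat \<Rightarrow> nat \<times> nat \<times> nat \<Rightarrow> (nat \<Rightarrow> real) set" where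
  "grid_box N = (\<lambda>(A, B, C). Sset (A / N) (B / N) (C / N))"

text \<open>The hypotheses of \<open>psi_image_Sset\<close> for the boxes with endpoints A/N, B/N, C/N and
  A'/N, B'/N, C'/N, cleared of denominators so that simp can decide them on numerals.\<close>
fun grid_box_step :: "nat \<Rightarrow> nat \<Rightarrow> nat \<times> nat \<times> nat \<Rightarrow> nat \<times> nat \<times> nat \<Rightarrow> bool" where
  "grid_box_step d N (A, B, C) (A', B', C') \<longleftrightarrow>
     C < N \<and> C' < N \<and>
     A' * (N + 2 * B) ^ d \<le> (N + B) ^ d * N \<and>
     (N * N + A * N + A * C) ^ d * N \<le> B' * (N * (N + 2 * A)) ^ d \<and>
     (B * (N * N + N * C + C * C)) ^ d * N \<le> C' * (N * (N * N + B * N + B * C)) ^ d \<and>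
     C ^ d * N \<le> C' * N ^ d"

lemma of_nat_divide_le_divide:
  fixes a b c d :: nat
  assumes "0 < b" "0 < d" "a * d \<le> c * b"
  shows "real a / real b \<le> real c / real d"
  using assms by (intro divide_le_divide_cross) (auto simp flip: of_nat_mult)

lemma psi_image_grid_box:
  assumes "1 \<le> d" "0 < N" "grid_box_step d N X Y"
  shows "psi d ` grid_box N X \<subseteq> grid_box N Y"
proof -
  obtain A B C A' B' C' where X: "X = (A, B, C)" and Y: "Y = (A', B', C')"
    by (cases X, cases Y) auto
  have N: "0 < real N" using assms by simp
  have "psi_head (B / N) 0 ^ d = real ((N + B) ^ d) / real ((N + 2 * B) ^ d)"
    using N by (simp add: psi_head_def power_divide divide_simps add_pos_nonneg)
  moreover have "psi_head (A / N) (C / N) ^ d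
      = real ((N * N + A * N + A * C) ^ d) / real ((N * (N + 2 * A)) ^ d)"
    using N by (simp add: psi_head_def power_divide divide_simps add_pos_nonneg) (simp add: algebra_simps)
  moreover have "psi_tail (B / N) (C / N) (C / N) ^ d
      = real ((B * (N * N + N * C + C * C)) ^ d) / real ((N * (N * N + B * N + B * C)) ^ d)"
    using N by (simp add: psi_tail_def power_divide divide_simps add_pos_nonneg) (simp add: algebra_simps)
  moreover have "(C / N) ^ d = real (C ^ d) / real (N ^ d)"
    by (simp add: power_divide)
  ultimately show ?thesis
    using assms unfolding X Y grid_box_def
    by (simp only: case_prod_conv, intro psi_image_Sset)
      (auto intro!: of_nat_divide_le_divide simp del: of_nat_power)
qed

lemma funpow_image_chain:
  assumes "successively R (X # L)" and "\<And>X Y. R X Y \<Longrightarrow> f ` S X \<subseteq> S Y"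
  shows "(f ^^ length L) ` S X \<subseteq> S (last (X # L))"
  using assms(1)
proof (induction L arbitrary: X)
  case (Cons Y L)
  then have "(f ^^ length L) ` f ` S X \<subseteq> (f ^^ length L) ` S Y"
    using assms(2) by (intro image_mono) simp
  also have "\<dots> \<subseteq> S (last (Y # L))" using Cons by simp
  finally show ?case by (simp add: funpow_Suc_right image_comp del: funpow.simps)
qed simp

lemma funpow_image_invariant: "f ` T \<subseteq> T \<Longrightarrow> (f ^^ k) ` T \<subseteq> T"
  by (induction k) (auto simp: image_subset_iff)

lemma eventually_funpow_image_subset:
  assumes "(f ^^ K) ` S \<subseteq> T" and "f ` T \<subseteq> T" and "T \<subseteq> U"
  shows "\<forall>k\<ge>K. (f ^^ k) ` S \<subseteq> U"
proof (intro allI impI)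
  fix k assume "K \<le> k"
  then have "(f ^^ k) ` S = (f ^^ (k - K)) ` (f ^^ K) ` S"
    by (simp add: image_comp flip: funpow_add)
  also have "\<dots> \<subseteq> T"
    using assms(1) funpow_image_invariant[OF assms(2)] by (meson image_mono order.trans)
  finally show "(f ^^ k) ` S \<subseteq> U" using assms(3) by simp
qed

lemma successively_take_drop:
  assumes "successively P (take n xs)" and "successively P (drop k xs)" and "k < n"
  shows "successively P xs"
  unfolding successively_conv_nth
proof (intro allI impI)
  fix i assume i: "Suc i < length xs"
  show "P (xs ! i) (xs ! Suc i)"
  proof (cases "i < k")
    case True
    then show ?thesis using successively_nth[OF assms(1), of i] i assms(3) by simp
  next
    case False
    then show ?thesis using successively_nth[OF assms(2), of "i - k"] i by simp
  qed
qed

definition rho :: "real \<Rightarrow> real" where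
  "rho t = max (psi_tail 1 t t ^ 2) (t ^ 2)"

lemma psi_tail_1_bounds:
  assumes "0 \<le> t" "t < 1"
  shows "0 \<le> psi_tail 1 t t" "psi_tail 1 t t < 1"
proof -
  show "0 \<le> psi_tail 1 t t" using assms by (intro psi_tail_nonneg) auto
  have "t * t < 1 * 1" using assms by (intro mult_strict_mono) auto
  then show "psi_tail 1 t t < 1" using assms by (simp add: psi_tail_def)
qed

lemma rho_bounds: "0 \<le> t \<Longrightarrow> t < 1 \<Longrightarrow> 0 \<le> rho t \<and> rho t < 1"
  using psi_tail_1_bounds[of t] by (simp add: rho_def power_less_one_iff le_max_iff_disj)

lemma psi_image_Sset_0_1:
  assumes "2 \<le> d" "0 \<le> t" "t < 1"
  shows "psi d ` Sset 0 1 t \<subseteq> Sset 0 1 (rho t)"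
proof (rule psi_image_Sset)
  show "psi_tail 1 t t ^ d \<le> rho t"
    using assms psi_tail_1_bounds[of t] power_decreasing[of 2 d "psi_tail 1 t t"]
    by (simp add: rho_def)
  show "t ^ d \<le> rho t"
    using assms power_decreasing[of 2 d t] by (simp add: rho_def)
qed (use assms rho_bounds[of t] in \<open>auto simp: psi_head_def\<close>)

lemma rho_le_half:
  assumes "0 \<le> t" "t \<le> 1/2"
  shows "rho t \<le> 1/2"
proof -
  have "t * t \<le> t * (1/2)" using assms by (intro mult_left_mono) auto
  then have "1 + t + t * t \<le> 7/10 * (2 + t)" using assms unfolding ring_distribs by linarith
  moreover have "0 < 2 + t" using assms by linarith
  ultimately have "psi_tail 1 t t \<le> 7/10" by (simp add: psi_tail_def pos_divide_le_eq)
  then have "psi_tail 1 t t ^ 2 \<le> (7/10) ^ 2"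
    using assms by (intro power_mono psi_tail_nonneg) auto
  moreover have "t ^ 2 \<le> (1/2) ^ 2" using assms by (intro power_mono) auto
  ultimately show ?thesis by (simp add: rho_def power2_eq_square)
qed

lemma rho_gap:
  assumes "1/2 \<le> t" "t < 1"
  shows "101/100 * (1 - t) \<le> 1 - rho t"
proof -
  have "t ^ 2 \<le> 1 - 101/100 * (1 - t)"
  proof -
    have "0 \<le> (1 - t) * (t - 1/100)" using assms by simp
    moreover have "(1 - t) * (t - 1/100) = 1 - 101/100 * (1 - t) - t ^ 2"
      by (simp add: power2_eq_square field_simps)
    ultimately show ?thesis by linarith
  qed
  moreover have "psi_tail 1 t t ^ 2 \<le> 1 - 101/100 * (1 - t)"
  proof -
    have "1/8 \<le> t ^ 3" "1/4 \<le> t ^ 2"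
      using power_mono[OF assms(1), of 3] power_mono[OF assms(1), of 2] by (simp_all add: power_divide)
    then have "0 \<le> (1 - t) * (t ^ 3 + 199/100 * t ^ 2 + 96/100 * t - 104/100)"
      using assms by (intro mult_nonneg_nonneg) auto
    moreover have "(1 - t) * (t ^ 3 + 199/100 * t ^ 2 + 96/100 * t - 104/100)
        = (1 - 101/100 * (1 - t)) * (2 + t) ^ 2 - (1 + t + t ^ 2) ^ 2"
      by (simp add: power2_eq_square power3_eq_cube field_simps)
    ultimately have "(1 + t + t ^ 2) ^ 2 \<le> (1 - 101/100 * (1 - t)) * (2 + t) ^ 2" by linarith
    moreover have "0 < (2 + t) ^ 2" using assms by simp
    ultimately show ?thesis
      by (simp add: psi_tail_def power_divide pos_divide_le_eq power2_eq_square)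
  qed
  ultimately have "rho t \<le> 1 - 101/100 * (1 - t)" by (simp only: rho_def max.bounded_iff)
  then show ?thesis by linarith
qed

lemma rho_funpow:
  assumes "0 \<le> c" "c < 1"
  shows "0 \<le> (rho ^^ k) c \<and> (rho ^^ k) c < 1 \<and>
    min (1/2) ((101/100) ^ k * (1 - c)) \<le> 1 - (rho ^^ k) c"
proof (induction k)
  case (Suc k)
  define t where "t = (rho ^^ k) c"
  have t: "0 \<le> t" "t < 1" "min (1/2) ((101/100) ^ k * (1 - c)) \<le> 1 - t"
    using Suc by (simp_all add: t_def)
  have "min (1/2) ((101/100) ^ Suc k * (1 - c)) \<le> 1 - rho t"
  proof (cases "t \<le> 1/2")
    case True
    then show ?thesis using rho_le_half[OF t(1)] by linarith
  next
    case False
    then have "min (1/2) ((101/100) ^ Suc k * (1 - c)) \<le> 101/100 * min (1/2) ((101/100) ^ k * (1 - c))"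
      by (simp add: min_def)
    also have "\<dots> \<le> 1 - rho t" using t rho_gap[of t] False by simp
    finally show ?thesis .
  qed
  then show ?case using rho_bounds[OF t(1,2)] by (simp add: t_def)
qed (use assms in simp)

lemma funpow_psi_Sset_0_1:
  assumes "2 \<le> d" "0 \<le> c" "c < 1"
  shows "(psi d ^^ k) ` Sset 0 1 c \<subseteq> Sset 0 1 ((rho ^^ k) c)"
proof (induction k)
  case (Suc k)
  have "(psi d ^^ Suc k) ` Sset 0 1 c \<subseteq> psi d ` Sset 0 1 ((rho ^^ k) c)"
    using Suc by (auto simp: image_comp)
  also have "\<dots> \<subseteq> Sset 0 1 ((rho ^^ Suc k) c)"
    using assms rho_funpow[OF assms(2,3), of k] by (simp add: psi_image_Sset_0_1)
  finally show ?case .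
qed simp

lemma eventually_Sset_half:
  assumes "2 \<le> d" "0 \<le> c" "c < 1"
  obtains K where "(psi d ^^ K) ` Sset 0 1 c \<subseteq> Sset 0 1 (1/2)"
proof -
  obtain K where "1 / (1 - c) < (101/100) ^ K"
    using real_arch_pow[of "101/100"] by auto
  then have "1 < (101/100) ^ K * (1 - c)"
    using assms by (simp add: pos_divide_less_eq)
  then have "(rho ^^ K) c \<le> 1/2" using rho_funpow[OF assms(2,3), of K] by linarith
  then have "Sset 0 1 ((rho ^^ K) c) \<subseteq> Sset 0 1 (1/2)" by (auto simp: Sset_def)
  then show thesis using that funpow_psi_Sset_0_1[OF assms] by blast
qed

lemma grid_box_subset_Sset:
  "a \<le> A / N \<Longrightarrow> B / N \<le> b \<Longrightarrow> C / N \<le> c \<Longrightarrow> grid_box N (A, B, C) \<subseteq> Sset a b c"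
  by (auto simp: grid_box_def Sset_def)

lemma eventually_psi_image_subset_of_chain:
  assumes "1 \<le> d" "0 < N" and start: "(psi d ^^ K) ` S \<subseteq> grid_box N X"
    and chain: "successively (grid_box_step d N) (X # L)"
    and stable: "grid_box_step d N (last (X # L)) (last (X # L))"
    and target: "grid_box N (last (X # L)) \<subseteq> U"
  shows "\<exists>K. \<forall>k\<ge>K. (psi d ^^ k) ` S \<subseteq> U"
proof -
  have "(psi d ^^ (length L + K)) ` S = (psi d ^^ length L) ` (psi d ^^ K) ` S"
    by (simp add: funpow_add image_comp)
  also have "\<dots> \<subseteq> grid_box N (last (X # L))"
    using funpow_image_chain[OF chain psi_image_grid_box[OF assms(1,2)]] start
    by (meson image_mono order.trans)
  finally show ?thesis
    using eventually_funpow_image_subset psi_image_grid_box[OF assms(1,2) stable] target by blast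
qed

text \<open>The boxes were obtained by iterating the endpoint bounds of \<open>psi_image_Sset\<close>, starting
  from (0, 1, 1/2) = (0, 10000, 5000)/10000 and rounding outwards to the grid 1/10000.\<close>
definition certificate :: "nat \<Rightarrow> (nat \<times> nat \<times> nat) list" where
  "certificate d =
    (if d = 2 then
       [(4444, 10000, 4900), (4444, 7745, 4828), (4846, 7715, 3827), (4852, 7193, 3259),
        (4970, 6956, 2781), (5028, 6726, 2492)]
     else if d = 3 then
       [(2962, 10000, 3430), (2962, 6764, 2423), (3617, 6340, 1094), (3739, 5376, 728),
        (4067, 5152, 497)]
     else if d = 4 then
       [(1975, 10000, 2401), (1975, 6343, 1127), (2693, 5846, 307), (2847, 4754, 201),
        (3271, 4571, 114)]
     else if d = 5 then
       [(1316, 10000, 1681), (1316, 6356, 512), (1936, 5943, 105), (2051, 4757, 75),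
        (2473, 4587, 36), (2548, 4063, 32), (2811, 3981, 21), (2857, 3718, 19),
        (3014, 3675, 15)]
     else if d = 6 then
       [(877, 10000, 1177), (877, 6646, 233), (1332, 6351, 45), (1395, 5150, 35),
        (1727, 5014, 16), (1774, 4392, 14), (2023, 4314, 9), (2058, 3937, 8),
        (2247, 3889, 6), (2273, 3642, 5), (2417, 3610, 4), (2437, 3442, 4),
        (2546, 3420, 3), (2561, 3302, 3), (2643, 3286, 3), (2655, 3203, 3),
        (2716, 3191, 3)]
     else
       [(585, 10000, 824), (585, 7084, 108), (881, 6891, 23), (911, 5807, 19),
        (1118, 5711, 10), (1141, 5118, 9), (1298, 5057, 6), (1317, 4673, 5),
        (1443, 4630, 4), (1459, 4357, 4), (1564, 4324, 3), (1577, 4117, 3),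
        (1667, 4092, 2), (1678, 3928, 2), (1756, 3908, 2), (1766, 3775, 2),
        (1835, 3759, 2), (1843, 3647, 2), (1905, 3635, 1), (1912, 3539, 1),
        (1968, 3528, 1), (1974, 3446, 1), (2024, 3437, 1), (2030, 3366, 1),
        (2075, 3358, 1), (2080, 3296, 1), (2122, 3290, 1), (2126, 3234, 1),
        (2164, 3229, 1), (2167, 3179, 1), (2203, 3176, 1), (2205, 3130, 1),
        (2238, 3128, 1), (2240, 3087, 1), (2270, 3085, 1), (2272, 3049, 1),
        (2299, 3046, 1), (2301, 3014, 1), (2326, 3012, 1), (2328, 2983, 1),
        (2350, 2980, 1), (2353, 2955, 1), (2373, 2952, 1), (2375, 2929, 1),
        (2394, 2927, 1), (2396, 2906, 1), (2413, 2903, 1), (2415, 2885, 1),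
        (2430, 2883, 1), (2432, 2866, 1), (2446, 2864, 1), (2448, 2849, 1),
        (2461, 2847, 1), (2463, 2833, 1), (2475, 2831, 1), (2476, 2818, 1),
        (2488, 2817, 1), (2488, 2804, 1), (2500, 2804, 1), (2500, 2792, 1),
        (2510, 2792, 1), (2510, 2781, 1), (2520, 2781, 1), (2520, 2771, 1),
        (2529, 2771, 1), (2529, 2762, 1), (2537, 2762, 1), (2537, 2754, 1),
        (2544, 2754, 1), (2544, 2746, 1), (2551, 2746, 1), (2551, 2739, 1),
        (2558, 2739, 1), (2558, 2732, 1), (2564, 2732, 1), (2564, 2726, 1),
        (2570, 2726, 1), (2570, 2720, 1), (2575, 2720, 1), (2575, 2715, 1),
        (2580, 2715, 1), (2580, 2710, 1), (2584, 2710, 1), (2584, 2706, 1),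
        (2588, 2706, 1), (2588, 2702, 1), (2592, 2702, 1), (2592, 2698, 1),
        (2595, 2698, 1), (2595, 2695, 1), (2598, 2695, 1), (2598, 2692, 1),
        (2601, 2692, 1)])"

lemma certificate_chain_2: "successively (grid_box_step 2 10000) ((0, 10000, 5000) # certificate 2)"
  by (simp add: certificate_def)

lemma certificate_chain_3: "successively (grid_box_step 3 10000) ((0, 10000, 5000) # certificate 3)"
  by (simp add: certificate_def)

lemma certificate_chain_4: "successively (grid_box_step 4 10000) ((0, 10000, 5000) # certificate 4)"
  by (simp add: certificate_def)

lemma certificate_chain_5: "successively (grid_box_step 5 10000) ((0, 10000, 5000) # certificate 5)"
  by (simp add: certificate_def)

lemma certificate_chain_6: "successively (grid_box_step 6 10000) ((0, 10000, 5000) # certificate 6)"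
  by (simp add: certificate_def)

text \<open>The long chain for d = 7 is checked in two overlapping halves, which can run in parallel.\<close>
lemma certificate_chain_7_take:
  "successively (grid_box_step 7 10000) (take 48 ((0, 10000, 5000) # certificate 7))"
  by (simp add: certificate_def)

lemma certificate_chain_7_drop:
  "successively (grid_box_step 7 10000) (drop 47 ((0, 10000, 5000) # certificate 7))"
  by (simp add: certificate_def)

lemma certificate_chain:
  assumes "2 \<le> d" "d \<le> 7"
  shows "successively (grid_box_step d 10000) ((0, 10000, 5000) # certificate d)"
proof -
  have "d \<in> {2, 3, 4, 5, 6, 7}" using assms by auto
  then show ?thesis
    using certificate_chain_2 certificate_chain_3 certificate_chain_4 certificate_chain_5
      certificate_chain_6 successively_take_drop[OF certificate_chain_7_take certificate_chain_7_drop]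
    by auto
qed

lemma certificate_last:
  assumes "2 \<le> d" "d \<le> 7"
  defines "X \<equiv> last ((0, 10000, 5000) # certificate d)"
  shows "grid_box_step d 10000 X X" and "grid_box 10000 X \<subseteq> Sset (ahat d) (bhat d) (chat d)"
proof -
  have "d \<in> {2, 3, 4, 5, 6, 7}" using assms by auto
  then show "grid_box_step d 10000 X X" "grid_box 10000 X \<subseteq> Sset (ahat d) (bhat d) (chat d)"
    unfolding X_def
    by (auto simp: certificate_def ahat_def bhat_def chat_def
        intro!: grid_box_subset_Sset[THEN subsetD])
qed

theorem proposition2p8:
  fixes d :: nat and c :: real
  assumes "2 \<le> d" and "d \<le> 7" and "0 \<le> c" and "c < 1"
  shows "\<exists>K. \<forall>k\<ge>K. (psi d ^^ k) ` Sset 0 1 c \<subseteq> Sset (ahat d) (bhat d) (chat d)"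
proof -
  obtain K where "(psi d ^^ K) ` Sset 0 1 c \<subseteq> grid_box 10000 (0, 10000, 5000)"
    using eventually_Sset_half[OF assms(1,3,4)] by (auto simp: grid_box_def)
  from eventually_psi_image_subset_of_chain[OF _ _ this certificate_chain certificate_last]
  show ?thesis using assms by simp
qed

end
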